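(* Let $n=2$, $D(x_0,x_1,x_2;p)=\sum_{k=0}^2\binom{2}{k}p^k(1-p)^{2-k}|p-x_k|$, let $\Omega$ be the set of Borel probability measures on $[0,1]$ and $E(\sigma_0,\sigma_1,\sigma_2;\mu)=\iiiint D(x_0,x_1,x_2;p)\,d\sigma_0(x_0)d\sigma_1(x_1)d\sigma_2(x_2)d\mu(p)$. Let $$p_1=\tfrac13\Big(1+\sqrt[3]{1+3\sqrt{57}}-\tfrac{8}{\sqrt[3]{1+3\sqrt{57}}}\Big)\approx0.3611,$$ the unique real root of $x^3-x^2+3x-1$, and set $p_0=0$, $p_2=1-p_1$, $p_3=1$, $$m_1=m_2=\frac{0.5}{p_1^2+(1-p_1)^2+1}\approx0.325,\qquad m_0=m_3=0.5-m_1\approx0.175,$$ $\mu=\sum_{i=0}^3m_i\delta_{p_i}$, and $$a_0=\frac{2p_1(1-p_1)^2}{p_1^2+(1-p_1)^2+1}\approx0.1916,\qquad a_1=0.5,\qquad a_2=1-a_0.$$ Then the strategy pair $(\delta_{a_0},\delta_{a_1},\delta_{a_2};\mu)$ is a Nash equilibrium, i.e. for all $\sigma_0,\sigma_1,\sigma_2,\nu\in\Omega$, $$E(\delta_{a_0},\delta_{a_1},\delta_{a_2};\nu)\le E(\delta_{a_0},\delta_{a_1},\delta_{a_2};\mu)\le E(\sigma_0,\sigma_1,\sigma_2;\mu),$$ so that $\min_{\sigma}\max_{\nu}E=\max_\nu\min_\sigma E$ is attained at this pair. Moreover, this pair is unique in the following sense: if $\sigma_0,\sigma_1,\sigma_2,\nu\in\Omega$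 satisfy the Nash equilibrium (saddle point) condition above, then $\int x\,d\sigma_i(x)=a_i$ for $i=0,1,2$ and $\nu=\sum_{i=0}^3m_i\delta_{p_i}$.
   Context: $\delta_x$ denotes the unit point mass at $x$. Player II chooses distributions $\sigma_0,\sigma_1,\sigma_2$ (guesses for the coin bias after observing $0,1,2$ heads in two tosses) and Player I chooses a distribution $\nu$ for the bias $p$; Player II pays the expected absolute error $E$. *)

theory Defs
  imports "HOL-Probability.Probability"
begin

definition I01 :: "real measure" where
  "I01 = restrict_space borel {0..1}"

definition Omega :: "real measure set" where
  "Omega = {M. prob_space M \<and> sets M = sets I01}"

definition dirac :: "real \<Rightarrow> real measure" where
  "dirac x = return I01 x"

definition D :: "real \<Rightarrow> real \<Rightarrow> real \<Rightarrow> real \<Rightarrow> real" where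
  "D x0 x1 x2 p =
     (\<Sum>k\<in>{0..2::nat}. real (2 choose k) * p ^ k * (1 - p) ^ (2 - k) * \<bar>p - [x0, x1, x2] ! k\<bar>)"

definition E :: "real measure \<Rightarrow> real measure \<Rightarrow> real measure \<Rightarrow> real measure \<Rightarrow> real" where
  "E s0 s1 s2 mu =
     (LINT p|mu. LINT x2|s2. LINT x1|s1. LINT x0|s0. D x0 x1 x2 p)"

definition p1 :: real where
  "p1 = (1 + root 3 (1 + 3 * sqrt 57) - 8 / root 3 (1 + 3 * sqrt 57)) / 3"

definition pp :: "nat \<Rightarrow> real" where
  "pp i = [0, p1, 1 - p1, 1] ! i"

definition m1 :: real where
  "m1 = 0.5 / (p1\<^sup>2 + (1 - p1)\<^sup>2 + 1)"

definition mm :: "nat \<Rightarrow> real" where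
  "mm i = [0.5 - m1, m1, m1, 0.5 - m1] ! i"

definition mu :: "real measure" where
  "mu = measure_of {0..1} (sets I01)
          (\<lambda>A. ennreal (\<Sum>i\<in>{0..3::nat}. mm i * indicator A (pp i)))"

definition a0 :: real where
  "a0 = 2 * p1 * (1 - p1)\<^sup>2 / (p1\<^sup>2 + (1 - p1)\<^sup>2 + 1)"

definition saddle :: "real measure \<Rightarrow> real measure \<Rightarrow> real measure \<Rightarrow> real measure \<Rightarrow> bool" where
  "saddle s0 s1 s2 nu \<longleftrightarrow>
     (\<forall>t0\<in>Omega. \<forall>t1\<in>Omega. \<forall>t2\<in>Omega. \<forall>nu'\<in>Omega.
        E s0 s1 s2 nu' \<le> E s0 s1 s2 nu \<and> E s0 s1 s2 nu \<le> E t0 t1 t2 nu)"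

end

theory Submission
  imports Defs
begin

text \<open>Against the pure guesses a0, 1/2, 1 - a0 the loss, as a function of the bias p, is at most
  a0 on [0,1], with equality exactly at the support points 0, p1, 1 - p1, 1 of mu: the cubic
  equation for p1 makes p1 a double root of the deficit. Conversely, the weights of mu are chosen so
  that against mu every mixed guess loses a0 plus nonnegative penalties for putting mass on the wrong
  side of p1 or 1 - p1. Hence the value is a0.

  For uniqueness, a saddle point also has value a0. The bias measure can then only charge the points
  where the equilibrium loss equals a0, and the pure guesses a0, 1/2, 1 - a0 must be best responses
  to it; since the loss is affine in each guess between consecutive support points, this forces
  zero slopes there, which determines the weights. Evaluating the loss of the saddle guesses at the
  biases 0, p1 and 1 determines their means.\<close>

lemma p1_root: "p1^3 - p1^2 + 3 * p1 - 1 = 0"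
proof -
  define c where "c = root 3 (1 + 3 * sqrt 57)"
  have c_cube: "c^3 = 1 + 3 * sqrt 57" unfolding c_def by (simp add: odd_real_root_pow)
  have c_pos: "c > 0" unfolding c_def by (simp add: add_pos_nonneg)
  have "(1 + 3 * sqrt 57) * (3 * sqrt 57 - 1) = 512"
    by (simp add: algebra_simps)
  moreover have "0 < 1 + 3 * sqrt 57" by (simp add: add_pos_nonneg)
  ultimately have c_inv: "512 / c^3 = 3 * sqrt 57 - 1"
    unfolding c_cube by (simp add: field_simps)
  define y where "y = c - 8 / c"
  have "y^3 = c^3 - 512 / c^3 - 24 * y"
    unfolding y_def using c_pos by (simp add: field_simps power3_eq_cube power2_eq_square)
  then have "y^3 + 24 * y - 2 = 0" using c_cube c_inv by simp
  moreover have "y = 3 * p1 - 1" unfolding y_def p1_def c_def by (simp add: field_simps)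
  ultimately show ?thesis by (simp add: algebra_simps power3_eq_cube power2_eq_square)
qed

lemma p1_bounds: "0 < p1" "p1 < 1/2"
proof -
  have factor: "p1 * (p1^2 - p1 + 3) = 1"
    using p1_root by (simp add: algebra_simps power2_eq_square power3_eq_cube)
  have big: "p1^2 - p1 + 3 > 2"
    using zero_le_power2[of "p1 - 1/2"] by (simp add: power2_eq_square algebra_simps)
  show "0 < p1" using zero_less_mult_pos2[of p1 "p1^2 - p1 + 3"] factor big by simp
  then have "p1 * 2 < p1 * (p1^2 - p1 + 3)" using big by simp
  then show "p1 < 1/2" using factor by simp
qed

lemma a0_eq: "a0 = 2 * p1^2 / (1 + p1)"
proof -
  have "2 * p1 * (1 - p1)\<^sup>2 * (1 + p1) = 2 * p1^2 * (p1\<^sup>2 + (1 - p1)\<^sup>2 + 1)"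
    using p1_root by algebra
  moreover have "p1\<^sup>2 + (1 - p1)\<^sup>2 + 1 > 0" "1 + p1 > 0"
    using p1_bounds by (simp_all add: add_nonneg_pos)
  ultimately show ?thesis unfolding a0_def by (simp add: field_simps)
qed

lemma a0_bounds: "0 < a0" "a0 < p1"
proof -
  show "0 < a0" unfolding a0_eq using p1_bounds by simp
  have "2 * p1^2 < p1 * (1 + p1)" using p1_bounds by (simp add: power2_eq_square algebra_simps)
  then show "a0 < p1" unfolding a0_eq using p1_bounds by (simp add: divide_less_eq)
qed

lemma m1_eq: "m1 * (p1^2 + (1 - p1)^2 + 1) = 1/2"
proof -
  have "p1^2 + (1 - p1)^2 + 1 > 0" by (simp add: add_nonneg_pos)
  then show ?thesis unfolding m1_def by simp
qed

lemma m1_bounds: "0 < m1" "m1 < 1/2"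
proof -
  have "p1^2 + (1 - p1)^2 + 1 > 1" using p1_bounds by (simp add: add_pos_nonneg)
  then show "0 < m1" "m1 < 1/2" unfolding m1_def by (simp_all add: divide_less_eq)
qed

lemma m0_eq: "1/2 - m1 = m1 * (p1^2 + (1 - p1)^2)"
  using m1_eq by (simp add: algebra_simps)

lemma a0_eq_m1: "a0 = 4 * m1 * p1 * (1 - p1)^2"
proof -
  have "p1^2 + (1 - p1)^2 + 1 > 0" by (simp add: add_nonneg_pos)
  then show ?thesis unfolding a0_def m1_def by (simp add: field_simps)
qed

section \<open>Loss of the equilibrium guesses\<close>

lemma D_expand:
  "D x0 x1 x2 p = (1 - p)^2 * \<bar>p - x0\<bar> + 2 * p * (1 - p) * \<bar>p - x1\<bar> + p^2 * \<bar>p - x2\<bar>"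
  unfolding D_def by (simp add: numeral_2_eq_2)

lemma D_nonneg: "0 \<le> p \<Longrightarrow> p \<le> 1 \<Longrightarrow> 0 \<le> D x0 x1 x2 p"
  unfolding D_expand by (auto intro!: add_nonneg_nonneg mult_nonneg_nonneg)

lemma D_le_1:
  assumes "p \<in> {0..1}" "x0 \<in> {0..1}" "x1 \<in> {0..1}" "x2 \<in> {0..1}"
  shows "D x0 x1 x2 p \<le> 1"
proof -
  have "D x0 x1 x2 p \<le> (1 - p)^2 * 1 + 2 * p * (1 - p) * 1 + p^2 * 1"
    unfolding D_expand using assms by (intro add_mono mult_left_mono) auto
  also have "\<dots> = 1" by (simp add: algebra_simps power2_eq_square)
  finally show ?thesis .
qed

definition eq_loss :: "real \<Rightarrow> real" where
  "eq_loss p = D a0 (1/2) (1 - a0) p"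

lemma eq_loss_sym: "eq_loss (1 - p) = eq_loss p"
  unfolding eq_loss_def D_expand by (simp add: algebra_simps abs_minus_commute)

lemma eq_loss_below_a0:
  assumes "0 \<le> p" "p \<le> a0"
  shows "eq_loss p = a0 - 2 * a0 * p"
proof -
  have "a0 < 1/2" using a0_bounds p1_bounds by simp
  then have "eq_loss p = (1 - p)^2 * (a0 - p) + 2 * p * (1 - p) * (1/2 - p) + p^2 * (1 - a0 - p)"
    unfolding eq_loss_def D_expand using assms by (simp add: abs_if)
  also have "\<dots> = a0 - 2 * a0 * p" by (simp add: algebra_simps power2_eq_square)
  finally show ?thesis .
qed

text \<open>This is where the cubic equation for p1 enters.\<close>
lemma eq_loss_above_a0:
  assumes "a0 \<le> p" "p \<le> 1/2"
  shows "(1 + p1) * (a0 - eq_loss p) = 2 * (p - p1)^2 * (2 - p * (1 + p1))"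
proof -
  have "a0 < 1/2" using a0_bounds p1_bounds by simp
  then have loss: "eq_loss p = (1 - p)^2 * (p - a0) + 2 * p * (1 - p) * (1/2 - p) + p^2 * (1 - a0 - p)"
    unfolding eq_loss_def D_expand using assms by (simp add: abs_if)
  have a0_p1: "a0 * (1 + p1) = 2 * p1^2" using p1_bounds by (simp add: a0_eq field_simps)
  have "(1 + p1) * (a0 - eq_loss p)
      = 2 * ((a0 * (1 + p1)) * p - (1 - p)^2 * (p * (1 + p1) - a0 * (1 + p1)))"
    unfolding loss by (simp add: algebra_simps power2_eq_square)
  also have "\<dots> = 2 * (p - p1)^2 * (2 - p * (1 + p1)) + 2 * p * (p1^3 - p1^2 + 3 * p1 - 1)"
    unfolding a0_p1 by (simp add: algebra_simps power2_eq_square power3_eq_cube)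
  finally show ?thesis using p1_root by simp
qed

lemma eq_loss_lower_half:
  assumes "0 \<le> p" "p \<le> 1/2"
  shows "eq_loss p \<le> a0 \<and> (eq_loss p = a0 \<longleftrightarrow> p = 0 \<or> p = p1)"
proof (cases "p \<le> a0")
  case True
  then show ?thesis using eq_loss_below_a0[OF assms(1) True] a0_bounds assms by auto
next
  case False
  have "p * (1 + p1) \<le> 1/2 * (1 + p1)" using assms p1_bounds by (intro mult_right_mono) auto
  moreover have "1/2 * (1 + p1) < 2" using p1_bounds by simp
  ultimately have pos: "1 + p1 > 0" "2 - p * (1 + p1) > 0" using p1_bounds by linarith+
  have deficit: "(1 + p1) * (a0 - eq_loss p) = 2 * (p - p1)^2 * (2 - p * (1 + p1))"
    using eq_loss_above_a0 False assms by simp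
  then have "0 \<le> (1 + p1) * (a0 - eq_loss p)" using pos by simp
  then have "eq_loss p \<le> a0" using pos by (simp add: zero_le_mult_iff)
  moreover have "eq_loss p = a0 \<longleftrightarrow> p = p1" using deficit pos by auto
  ultimately show ?thesis using False a0_bounds by auto
qed

lemma eq_loss_le: "0 \<le> p \<Longrightarrow> p \<le> 1 \<Longrightarrow> eq_loss p \<le> a0"
  using eq_loss_lower_half[of p] eq_loss_lower_half[of "1 - p"] eq_loss_sym[of p]
  by (cases "p \<le> 1/2") auto

lemma atLeast0_atMost_3: "{0..3::nat} = {0, 1, 2, 3}"
  by auto

lemma sum_atLeast0_atMost_3: "(\<Sum>i\<in>{0..3::nat}. f i) = f 0 + f 1 + f 2 + f 3"
  by (simp add: atLeast0_atMost_3 add.assoc)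

lemma pp_image: "pp ` {0..3} = {0, p1, 1 - p1, 1}"
  by (simp add: atLeast0_atMost_3 pp_def)

lemma eq_loss_eq_a0_iff:
  "0 \<le> p \<Longrightarrow> p \<le> 1 \<Longrightarrow> eq_loss p = a0 \<longleftrightarrow> p \<in> pp ` {0..3}"
  unfolding pp_image
  using eq_loss_lower_half[of p] eq_loss_lower_half[of "1 - p"] eq_loss_sym[of p] p1_bounds
  by (cases "p \<le> 1/2") auto

section \<open>Probability measures on [0,1]\<close>

lemma space_I01: "space I01 = {0..1}"
  unfolding I01_def by (simp add: space_restrict_space)

lemma sets_I01_iff: "A \<in> sets I01 \<longleftrightarrow> A \<subseteq> {0..1} \<and> A \<in> sets borel"
  unfolding I01_def by (rule sets_restrict_space_iff) simp

lemma
  assumes "t \<in> Omega"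
  shows Omega_prob_space: "prob_space t"
    and sets_Omega: "sets t = sets I01"
    and space_Omega: "space t = {0..1}"
  using assms unfolding Omega_def by (auto dest: sets_eq_imp_space_eq simp: space_I01)

lemma borel_measurable_Omega:
  assumes "t \<in> Omega" "f \<in> borel_measurable borel"
  shows "f \<in> borel_measurable t"
proof -
  have "f \<in> borel_measurable I01" unfolding I01_def by (rule measurable_restrict_space1[OF assms(2)])
  then show ?thesis by (subst measurable_cong_sets[OF sets_Omega[OF assms(1)] refl])
qed

lemma integrable_Omega_bounded:
  fixes f :: "real \<Rightarrow> real"
  assumes "t \<in> Omega" "f \<in> borel_measurable borel" "\<And>x. x \<in> {0..1} \<Longrightarrow> \<bar>f x\<bar> \<le> B"
  shows "integrable t f"
proof -
  interpret prob_space t by (rule Omega_prob_space[OF assms(1)])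
  show ?thesis
    by (rule integrable_const_bound[where B=B]) (auto simp: space_Omega[OF assms(1)] assms borel_measurable_Omega)
qed

lemma dirac_in_Omega: "x \<in> {0..1} \<Longrightarrow> dirac x \<in> Omega"
  unfolding Omega_def dirac_def by (auto intro!: prob_space_return simp: space_I01)

lemma integral_dirac:
  fixes f :: "real \<Rightarrow> real"
  assumes "x \<in> {0..1}" "f \<in> borel_measurable borel"
  shows "(LINT y|dirac x. f y) = f x"
proof -
  have "f \<in> borel_measurable I01" unfolding I01_def by (rule measurable_restrict_space1[OF assms(2)])
  then show ?thesis unfolding dirac_def using integral_return[of x I01 f] assms(1) by (simp add: space_I01)
qed

definition mean :: "real measure \<Rightarrow> real" where
  "mean t = (LINT x|t. x)"

definition abs_dev :: "real measure \<Rightarrow> real \<Rightarrow> real" where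
  "abs_dev t p = (LINT x|t. \<bar>p - x\<bar>)"

definition upper_dev :: "real measure \<Rightarrow> real \<Rightarrow> real" where
  "upper_dev t p = (LINT x|t. max (x - p) 0)"

definition lower_dev :: "real measure \<Rightarrow> real \<Rightarrow> real" where
  "lower_dev t p = (LINT x|t. max (p - x) 0)"

lemma upper_dev_nonneg: "0 \<le> upper_dev t p"
  unfolding upper_dev_def by (rule Bochner_Integration.integral_nonneg) auto

lemma lower_dev_nonneg: "0 \<le> lower_dev t p"
  unfolding lower_dev_def by (rule Bochner_Integration.integral_nonneg) auto

lemma abs_dev_eq_upper_dev:
  assumes t: "t \<in> Omega"
  shows "abs_dev t p = p - mean t + 2 * upper_dev t p"
proof -
  interpret prob_space t by (rule Omega_prob_space[OF t])
  have int: "integrable t (\<lambda>x. x)" "integrable t (\<lambda>x. max (x - p) 0)"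
    by (auto intro!: integrable_Omega_bounded[OF t, where B="\<bar>p\<bar> + 1"])
  have "abs_dev t p = (LINT x|t. (p - x) + 2 * max (x - p) 0)" unfolding abs_dev_def
    by (rule Bochner_Integration.integral_cong) (auto simp: max_def)
  then show ?thesis unfolding mean_def upper_dev_def
    using int by (simp add: integral_add integral_diff prob_space)
qed

lemma abs_dev_eq_lower_dev:
  assumes t: "t \<in> Omega"
  shows "abs_dev t p = mean t - p + 2 * lower_dev t p"
proof -
  interpret prob_space t by (rule Omega_prob_space[OF t])
  have int: "integrable t (\<lambda>x. x)" "integrable t (\<lambda>x. max (p - x) 0)"
    by (auto intro!: integrable_Omega_bounded[OF t, where B="\<bar>p\<bar> + 1"])
  have "abs_dev t p = (LINT x|t. (x - p) + 2 * max (p - x) 0)" unfolding abs_dev_def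
    by (rule Bochner_Integration.integral_cong) (auto simp: max_def)
  then show ?thesis unfolding mean_def lower_dev_def
    using int by (simp add: integral_add integral_diff prob_space)
qed

lemma abs_dev_0: "t \<in> Omega \<Longrightarrow> abs_dev t 0 = mean t"
  unfolding abs_dev_def mean_def by (rule Bochner_Integration.integral_cong) (auto simp: space_Omega)

lemma abs_dev_1:
  assumes "t \<in> Omega"
  shows "abs_dev t 1 = 1 - mean t"
proof -
  have "upper_dev t 1 = (LINT x|t. 0)"
    unfolding upper_dev_def using assms by (intro Bochner_Integration.integral_cong) (auto simp: space_Omega)
  then show ?thesis using abs_dev_eq_upper_dev[OF assms, of 1] by simp
qed

lemma abs_dev_dirac: "x \<in> {0..1} \<Longrightarrow> abs_dev (dirac x) p = \<bar>p - x\<bar>"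
  unfolding abs_dev_def by (rule integral_dirac) auto

lemma abs_dev_lipschitz:
  assumes t: "t \<in> Omega"
  shows "\<bar>abs_dev t p - abs_dev t q\<bar> \<le> \<bar>p - q\<bar>"
proof -
  interpret prob_space t by (rule Omega_prob_space[OF t])
  have int: "integrable t (\<lambda>x. \<bar>r - x\<bar>)" for r
    by (rule integrable_Omega_bounded[OF t, where B="\<bar>r\<bar> + 1"]) auto
  have "abs_dev t p - abs_dev t q = (LINT x|t. \<bar>p - x\<bar> - \<bar>q - x\<bar>)"
    unfolding abs_dev_def using int by (simp add: integral_diff)
  also have "\<bar>\<dots>\<bar> \<le> (LINT x|t. \<bar>\<bar>p - x\<bar> - \<bar>q - x\<bar>\<bar>)"
    by (rule integral_abs_bound)
  also have "\<dots> \<le> (LINT x|t. \<bar>p - q\<bar>)"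
    using int by (intro integral_mono) auto
  also have "\<dots> = \<bar>p - q\<bar>" by (simp add: prob_space)
  finally show ?thesis .
qed

lemma borel_measurable_abs_dev: "t \<in> Omega \<Longrightarrow> abs_dev t \<in> borel_measurable borel"
  by (intro borel_measurable_continuous_onI lipschitz_on_continuous_on[where L=1] lipschitz_onI)
     (auto simp: dist_real_def abs_dev_lipschitz)

definition D_mixed :: "real measure \<Rightarrow> real measure \<Rightarrow> real measure \<Rightarrow> real \<Rightarrow> real" where
  "D_mixed t0 t1 t2 p =
     (1 - p)^2 * abs_dev t0 p + 2 * p * (1 - p) * abs_dev t1 p + p^2 * abs_dev t2 p"

lemma borel_measurable_D_mixed:
  "t0 \<in> Omega \<Longrightarrow> t1 \<in> Omega \<Longrightarrow> t2 \<in> Omega \<Longrightarrow> D_mixed t0 t1 t2 \<in> borel_measurable borel"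
  unfolding D_mixed_def using borel_measurable_abs_dev by measurable

lemma D_mixed_dirac:
  "x0 \<in> {0..1} \<Longrightarrow> x1 \<in> {0..1} \<Longrightarrow> x2 \<in> {0..1} \<Longrightarrow>
    D_mixed (dirac x0) (dirac x1) (dirac x2) p = D x0 x1 x2 p"
  unfolding D_mixed_def D_expand by (simp add: abs_dev_dirac)

lemma integral_affine_abs:
  assumes "t \<in> Omega"
  shows "(LINT x|t. c * \<bar>p - x\<bar> + d) = c * abs_dev t p + d"
proof -
  interpret prob_space t by (rule Omega_prob_space[OF assms])
  have "integrable t (\<lambda>x. \<bar>p - x\<bar>)"
    by (rule integrable_Omega_bounded[OF assms, where B="\<bar>p\<bar> + 1"]) auto
  then show ?thesis unfolding abs_dev_def by (simp add: prob_space)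
qed

lemma E_eq_integral_D_mixed:
  assumes "t0 \<in> Omega" "t1 \<in> Omega" "t2 \<in> Omega"
  shows "E t0 t1 t2 nu = (LINT p|nu. D_mixed t0 t1 t2 p)"
proof -
  have "(LINT x2|t2. LINT x1|t1. LINT x0|t0. D x0 x1 x2 p) = D_mixed t0 t1 t2 p" for p
  proof -
    let ?c0 = "(1 - p)^2" and ?c1 = "2 * p * (1 - p)" and ?c2 = "p^2"
    have "(LINT x0|t0. D x0 x1 x2 p) = ?c0 * abs_dev t0 p + (?c1 * \<bar>p - x1\<bar> + ?c2 * \<bar>p - x2\<bar>)"
      for x1 x2
      unfolding D_expand using integral_affine_abs[OF assms(1)] by (simp add: add.assoc)
    moreover have "(LINT x1|t1. ?c0 * abs_dev t0 p + (?c1 * \<bar>p - x1\<bar> + ?c2 * \<bar>p - x2\<bar>))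
        = ?c1 * abs_dev t1 p + (?c0 * abs_dev t0 p + ?c2 * \<bar>p - x2\<bar>)" for x2
      using integral_affine_abs[OF assms(2), of ?c1 p "?c0 * abs_dev t0 p + ?c2 * \<bar>p - x2\<bar>"]
      by (simp add: ac_simps)
    moreover have "(LINT x2|t2. ?c1 * abs_dev t1 p + (?c0 * abs_dev t0 p + ?c2 * \<bar>p - x2\<bar>))
        = D_mixed t0 t1 t2 p"
      using integral_affine_abs[OF assms(3), of ?c2 p "?c1 * abs_dev t1 p + ?c0 * abs_dev t0 p"]
      unfolding D_mixed_def by (simp add: ac_simps)
    ultimately show ?thesis by simp
  qed
  then show ?thesis unfolding E_def by simp
qed

lemma E_dirac_strategies:
  "x0 \<in> {0..1} \<Longrightarrow> x1 \<in> {0..1} \<Longrightarrow> x2 \<in> {0..1} \<Longrightarrow>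
    E (dirac x0) (dirac x1) (dirac x2) nu = (LINT p|nu. D x0 x1 x2 p)"
  by (simp add: E_eq_integral_D_mixed dirac_in_Omega D_mixed_dirac)

lemma E_dirac_bias:
  "t0 \<in> Omega \<Longrightarrow> t1 \<in> Omega \<Longrightarrow> t2 \<in> Omega \<Longrightarrow> p \<in> {0..1} \<Longrightarrow>
    E t0 t1 t2 (dirac p) = D_mixed t0 t1 t2 p"
  by (simp add: E_eq_integral_D_mixed integral_dirac borel_measurable_D_mixed)

section \<open>Measures with finite support\<close>

lemma integral_finite_support:
  fixes g :: "real \<Rightarrow> real" and f :: "'i \<Rightarrow> real"
  assumes M: "M \<in> Omega" and I: "finite I" "inj_on f I" "f ` I \<subseteq> {0..1}"
    and AE: "AE x in M. x \<in> f ` I" and g: "g \<in> borel_measurable borel"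
  shows "(LINT x|M. g x) = (\<Sum>i\<in>I. g (f i) * measure M {f i})"
proof -
  interpret prob_space M by (rule Omega_prob_space[OF M])
  let ?h = "\<lambda>x. \<Sum>i\<in>I. g (f i) * indicator {f i} x"
  have "AE x in M. g x = ?h x"
    using AE
  proof eventually_elim
    case (elim x)
    then obtain j where j: "j \<in> I" "x = f j" by auto
    have "?h x = (\<Sum>i\<in>I. if i = j then g (f i) else 0)"
      using j I(2) by (intro sum.cong) (auto simp: indicator_def dest: inj_onD)
    then show ?case using j I(1) by simp
  qed
  then have "(LINT x|M. g x) = (LINT x|M. ?h x)"
    by (intro integral_cong_AE borel_measurable_Omega[OF M]) (simp_all add: g)
  also have "\<dots> = (\<Sum>i\<in>I. LINT x|M. g (f i) * indicator {f i} x)"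
    by (intro Bochner_Integration.integral_sum integrable_Omega_bounded[OF M, where B="\<bar>g (f i)\<bar>" for i])
       (auto simp: indicator_def)
  also have "\<dots> = (\<Sum>i\<in>I. g (f i) * measure M {f i})"
    using I(3) by (intro sum.cong) (auto simp: space_Omega[OF M])
  finally show ?thesis .
qed

lemma emeasure_finite_support:
  fixes f :: "'i \<Rightarrow> real"
  assumes M: "M \<in> Omega" and I: "finite I" "inj_on f I" "f ` I \<subseteq> {0..1}"
    and AE: "AE x in M. x \<in> f ` I" and A: "A \<in> sets M"
  shows "emeasure M A = ennreal (\<Sum>i\<in>I. indicator A (f i) * measure M {f i})"
proof -
  interpret prob_space M by (rule Omega_prob_space[OF M])
  have "A \<in> sets borel" using A sets_Omega[OF M] by (simp add: sets_I01_iff)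
  then have "measure M A = (\<Sum>i\<in>I. indicator A (f i) * measure M {f i})"
    using integral_finite_support[OF M I AE, of "indicator A"] A by simp
  then show ?thesis by (simp add: emeasure_eq_measure)
qed

lemma Omega_eqI_finite_support:
  fixes f :: "'i \<Rightarrow> real"
  assumes M: "M \<in> Omega" and N: "N \<in> Omega"
    and I: "finite I" "inj_on f I" "f ` I \<subseteq> {0..1}"
    and AE: "AE x in M. x \<in> f ` I" "AE x in N. x \<in> f ` I"
    and masses: "\<And>i. i \<in> I \<Longrightarrow> measure M {f i} = measure N {f i}"
  shows "M = N"
proof (rule measure_eqI)
  show sets: "sets M = sets N" using sets_Omega[OF M] sets_Omega[OF N] by simp
  fix A assume "A \<in> sets M"
  then show "emeasure M A = emeasure N A"
    using emeasure_finite_support[OF M I AE(1)] emeasure_finite_support[OF N I AE(2)] sets masses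
    by simp
qed

lemma pp_vals: "pp 0 = 0" "pp 1 = p1" "pp 2 = 1 - p1" "pp 3 = 1"
  by (simp_all add: pp_def)

lemma mm_vals: "mm 0 = 1/2 - m1" "mm 1 = m1" "mm 2 = m1" "mm 3 = 1/2 - m1"
  by (simp_all add: mm_def)

lemma pp_in_unit: "pp ` {0..3} \<subseteq> {0..1}"
  using p1_bounds by (auto simp: pp_image)

lemma inj_on_pp: "inj_on pp {0..3}"
  using p1_bounds by (auto simp: inj_on_def atLeast0_atMost_3 pp_def)

lemma mm_nonneg: "i \<in> {0..3} \<Longrightarrow> 0 \<le> mm i"
  using m1_bounds by (auto simp: atLeast0_atMost_3 mm_def)

lemma mu_countably_additive:
  "countably_additive (sets I01) (\<lambda>A. ennreal (\<Sum>i\<in>{0..3::nat}. mm i * indicator A (pp i)))"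
  unfolding countably_additive_def
proof (intro allI impI)
  fix A :: "nat \<Rightarrow> real set" assume disj: "disjoint_family A"
  have split: "ennreal (\<Sum>i\<in>{0..3::nat}. mm i * indicator B (pp i))
      = (\<Sum>i\<in>{0..3::nat}. ennreal (mm i) * indicator B (pp i))" for B
  proof -
    have "ennreal (\<Sum>i\<in>{0..3::nat}. mm i * indicator B (pp i))
        = (\<Sum>i\<in>{0..3::nat}. ennreal (mm i * indicator B (pp i)))"
      by (rule sum_ennreal[symmetric]) (simp add: mm_nonneg)
    then show ?thesis by (simp add: ennreal_mult'' ennreal_indicator)
  qed
  have "(\<Sum>n. \<Sum>i\<in>{0..3::nat}. ennreal (mm i) * indicator (A n) (pp i))
      = (\<Sum>i\<in>{0..3::nat}. \<Sum>n. ennreal (mm i) * indicator (A n) (pp i))"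
    by (rule suminf_sum) simp
  also have "\<dots> = (\<Sum>i\<in>{0..3::nat}. ennreal (mm i) * indicator (\<Union>n. A n) (pp i))"
    using suminf_indicator[OF disj] by simp
  finally show "(\<Sum>n. ennreal (\<Sum>i\<in>{0..3}. mm i * indicator (A n) (pp i)))
      = ennreal (\<Sum>i\<in>{0..3}. mm i * indicator (\<Union>n. A n) (pp i))"
    unfolding split .
qed

lemma sigma_algebra_I01: "sigma_algebra {0..1} (sets I01)"
  using sets.sigma_algebra_axioms[of I01] by (simp add: space_I01)

lemma sets_mu: "sets mu = sets I01" and space_mu: "space mu = {0..1}"
  unfolding mu_def
  using sigma_algebra.sets_measure_of_eq[OF sigma_algebra_I01]
    sigma_algebra.space_measure_of_eq[OF sigma_algebra_I01]
  by auto

lemma emeasure_mu: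
  "A \<in> sets I01 \<Longrightarrow> emeasure mu A = ennreal (\<Sum>i\<in>{0..3}. mm i * indicator A (pp i))"
  unfolding mu_def
  by (rule emeasure_measure_of_sigma[OF sigma_algebra_I01 _ mu_countably_additive])
     (simp_all add: positive_def)

lemma mu_in_Omega: "mu \<in> Omega"
proof -
  have "{0..1} \<in> sets I01" using sets.top[of I01] by (simp add: space_I01)
  then have "emeasure mu (space mu) = ennreal (\<Sum>i\<in>{0..3}. mm i * indicator {0..1} (pp i))"
    by (simp add: emeasure_mu space_mu)
  also have "\<dots> = 1"
    using p1_bounds by (simp add: sum_atLeast0_atMost_3 pp_def mm_def)
  finally show ?thesis unfolding Omega_def by (auto intro!: prob_spaceI simp: sets_mu)
qed

lemma measure_mu_pp:
  assumes i: "i \<in> {0..3}"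
  shows "measure mu {pp i} = mm i"
proof -
  have "pp i \<in> {0..1}" using pp_in_unit i by blast
  then have "{pp i} \<in> sets I01" by (simp add: sets_I01_iff)
  moreover have "(\<Sum>j\<in>{0..3}. mm j * indicator {pp i} (pp j)) = (\<Sum>j\<in>{0..3}. if j = i then mm j else 0)"
    using inj_on_pp i by (intro sum.cong) (auto simp: indicator_def dest: inj_onD)
  ultimately have "emeasure mu {pp i} = ennreal (mm i)"
    using i by (simp add: emeasure_mu)
  then show ?thesis unfolding measure_def using mm_nonneg[OF i] by simp
qed

lemma AE_mu_support: "AE x in mu. x \<in> pp ` {0..3}"
proof (rule AE_I')
  let ?N = "{0..1} - pp ` {0..3}"
  have "pp ` {0..3} \<in> sets borel" by (intro borel_closed finite_imp_closed) simp
  then have N: "?N \<in> sets I01" by (auto simp: sets_I01_iff)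
  then have "emeasure mu ?N = 0"
    by (simp add: emeasure_mu sum.neutral)
  then show "?N \<in> null_sets mu" using N by (simp add: null_sets_def sets_mu)
  show "{x \<in> space mu. x \<notin> pp ` {0..3}} \<subseteq> ?N" by (auto simp: space_mu)
qed

section \<open>The equilibrium\<close>

lemma E_mu_sum:
  "t0 \<in> Omega \<Longrightarrow> t1 \<in> Omega \<Longrightarrow> t2 \<in> Omega \<Longrightarrow>
    E t0 t1 t2 mu = (\<Sum>i\<in>{0..3}. D_mixed t0 t1 t2 (pp i) * mm i)"
  unfolding E_eq_integral_D_mixed
  by (simp add: integral_finite_support[OF mu_in_Omega _ inj_on_pp pp_in_unit AE_mu_support]
      borel_measurable_D_mixed measure_mu_pp)

lemma E_mu_decomposition:
  assumes "t0 \<in> Omega" "t1 \<in> Omega" "t2 \<in> Omega"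
  shows "E t0 t1 t2 mu = a0 + 2 * m1 *
    ((1 - p1)^2 * upper_dev t0 p1 + 2 * p1 * (1 - p1) * lower_dev t1 p1 + p1^2 * lower_dev t2 p1
     + p1^2 * upper_dev t0 (1 - p1) + 2 * p1 * (1 - p1) * upper_dev t1 (1 - p1)
     + (1 - p1)^2 * lower_dev t2 (1 - p1))"
proof -
  have "E t0 t1 t2 mu = (1/2 - m1) * mean t0 + m1 * D_mixed t0 t1 t2 p1
      + m1 * D_mixed t0 t1 t2 (1 - p1) + (1/2 - m1) * (1 - mean t2)"
    unfolding E_mu_sum[OF assms] sum_atLeast0_atMost_3 pp_vals mm_vals D_mixed_def
    by (simp add: algebra_simps abs_dev_0[OF assms(1)] abs_dev_1[OF assms(3)])
  then show ?thesis
    unfolding m0_eq a0_eq_m1 D_mixed_def abs_dev_eq_upper_dev[OF assms(1)]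
      abs_dev_eq_lower_dev[OF assms(2), of p1] abs_dev_eq_upper_dev[OF assms(2), of "1 - p1"]
      abs_dev_eq_lower_dev[OF assms(3)]
    by (simp add: algebra_simps power2_eq_square)
qed

lemma a0_le_E_mu: "t0 \<in> Omega \<Longrightarrow> t1 \<in> Omega \<Longrightarrow> t2 \<in> Omega \<Longrightarrow> a0 \<le> E t0 t1 t2 mu"
  unfolding E_mu_decomposition using m1_bounds p1_bounds
  by (auto intro!: add_nonneg_nonneg mult_nonneg_nonneg upper_dev_nonneg lower_dev_nonneg)

lemma guesses_in_unit: "a0 \<in> {0..1}" "1/2 \<in> {0..(1::real)}" "1 - a0 \<in> {0..1}"
  using a0_bounds p1_bounds by auto

lemma borel_measurable_D: "D x0 x1 x2 \<in> borel_measurable borel"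
  unfolding D_expand[abs_def] by measurable

lemma E_equilibrium: "E (dirac a0) (dirac (1/2)) (dirac (1 - a0)) nu = (LINT p|nu. eq_loss p)"
  unfolding eq_loss_def using guesses_in_unit by (rule E_dirac_strategies)

lemma integrable_eq_loss: "nu \<in> Omega \<Longrightarrow> integrable nu eq_loss"
  unfolding eq_loss_def
  by (rule integrable_Omega_bounded[where B=1])
     (use guesses_in_unit in \<open>auto simp: borel_measurable_D D_nonneg intro!: D_le_1\<close>)

lemma E_equilibrium_le:
  assumes nu: "nu \<in> Omega"
  shows "E (dirac a0) (dirac (1/2)) (dirac (1 - a0)) nu \<le> a0"
proof -
  interpret prob_space nu by (rule Omega_prob_space[OF nu])
  have "(LINT p|nu. eq_loss p) \<le> (LINT p|nu. a0)"
    using integrable_eq_loss[OF nu] eq_loss_le by (intro integral_mono) (auto simp: space_Omega[OF nu])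
  then show ?thesis by (simp add: E_equilibrium prob_space)
qed

lemma E_equilibrium_mu: "E (dirac a0) (dirac (1/2)) (dirac (1 - a0)) mu = a0"
proof -
  have "eq_loss (pp i) = a0" if "i \<in> {0..3}" for i
  proof -
    have "pp i \<in> {0..1}" using pp_in_unit that by blast
    then show ?thesis using eq_loss_eq_a0_iff[of "pp i"] that by auto
  qed
  then have "(\<Sum>i\<in>{0..3}. eq_loss (pp i) * mm i) = (\<Sum>i\<in>{0..3}. a0 * mm i)"
    by (intro sum.cong) auto
  also have "\<dots> = a0" by (simp add: sum_atLeast0_atMost_3 mm_def algebra_simps)
  finally show ?thesis
    using guesses_in_unit by (simp add: E_mu_sum dirac_in_Omega D_mixed_dirac eq_loss_def)
qed

lemma saddle_equilibrium: "saddle (dirac a0) (dirac (1/2)) (dirac (1 - a0)) mu"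
  unfolding saddle_def using E_equilibrium_le E_equilibrium_mu a0_le_E_mu by simp

section \<open>Uniqueness\<close>

lemma saddle_values:
  assumes s: "s0 \<in> Omega" "s1 \<in> Omega" "s2 \<in> Omega" and nu: "nu \<in> Omega"
    and saddle: "saddle s0 s1 s2 nu"
  shows "E s0 s1 s2 nu = a0" "E s0 s1 s2 mu = a0"
    and "E (dirac a0) (dirac (1/2)) (dirac (1 - a0)) nu = a0"
proof -
  have "E s0 s1 s2 mu \<le> E s0 s1 s2 nu"
    using saddle mu_in_Omega unfolding saddle_def by blast
  moreover have "E s0 s1 s2 nu \<le> E (dirac a0) (dirac (1/2)) (dirac (1 - a0)) nu"
    using saddle guesses_in_unit dirac_in_Omega unfolding saddle_def by blast
  moreover note E_equilibrium_le[OF nu] a0_le_E_mu[OF s]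
  ultimately show "E s0 s1 s2 nu = a0" "E s0 s1 s2 mu = a0"
    and "E (dirac a0) (dirac (1/2)) (dirac (1 - a0)) nu = a0"
    by linarith+
qed

lemma dev_at_p1_eq_0_of_E_mu:
  assumes "t0 \<in> Omega" "t1 \<in> Omega" "t2 \<in> Omega" and "E t0 t1 t2 mu = a0"
  shows "upper_dev t0 p1 = 0" "lower_dev t1 p1 = 0" "lower_dev t2 p1 = 0"
proof -
  let ?c = "2 * p1 * (1 - p1)"
  have "0 < p1" "0 < 1 - p1" using p1_bounds by simp_all
  then have pos: "0 < (1 - p1)^2" "0 < p1^2" "0 < ?c" by simp_all
  define T where "T = [(1 - p1)^2 * upper_dev t0 p1, ?c * lower_dev t1 p1, p1^2 * lower_dev t2 p1,
    p1^2 * upper_dev t0 (1 - p1), ?c * upper_dev t1 (1 - p1), (1 - p1)^2 * lower_dev t2 (1 - p1)]"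
  have "\<forall>x\<in>set T. 0 \<le> x" unfolding T_def
    using pos[THEN less_imp_le] upper_dev_nonneg lower_dev_nonneg by (simp add: mult_nonneg_nonneg)
  moreover have "sum_list T = 0"
    using assms m1_bounds unfolding E_mu_decomposition[OF assms(1-3)] T_def by simp
  ultimately have "\<forall>x\<in>set T. x = 0" using sum_list_nonneg_eq_0_iff by blast
  then show "upper_dev t0 p1 = 0" "lower_dev t1 p1 = 0" "lower_dev t2 p1 = 0"
    unfolding T_def using pos by auto
qed

lemma sum_eq_bound_imp_eq:
  fixes w f :: "'i \<Rightarrow> real"
  assumes I: "finite I" "j \<in> I" and w: "sum w I = 1" "\<And>i. i \<in> I \<Longrightarrow> 0 < w i"
    and bound: "\<And>i. i \<in> I \<Longrightarrow> f i \<le> c" and avg: "(\<Sum>i\<in>I. f i * w i) = c"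
  shows "f j = c"
proof -
  have "(\<Sum>i\<in>I. (c - f i) * w i) = c * sum w I - (\<Sum>i\<in>I. f i * w i)"
    by (simp add: left_diff_distrib sum_subtractf sum_distrib_left)
  then have sum0: "(\<Sum>i\<in>I. (c - f i) * w i) = 0" using w(1) avg by simp
  have nonneg: "0 \<le> (c - f i) * w i" if "i \<in> I" for i
    using w(2) bound that by (simp add: less_imp_le)
  have "(c - f j) * w j = 0"
    using sum_nonneg_eq_0_iff[OF I(1), of "\<lambda>i. (c - f i) * w i"] nonneg sum0 I(2) by simp
  then show ?thesis using w(2)[OF I(2)] by simp
qed

lemma means_of_best_response:
  assumes t: "t0 \<in> Omega" "t1 \<in> Omega" "t2 \<in> Omega" and val: "E t0 t1 t2 mu = a0"
    and best: "\<And>p. p \<in> {0..1} \<Longrightarrow> D_mixed t0 t1 t2 p \<le> a0"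
  shows "mean t0 = a0" "mean t1 = 1/2" "mean t2 = 1 - a0"
proof -
  have at_support: "D_mixed t0 t1 t2 (pp i) = a0" if "i \<in> {0..3}" for i
  proof (rule sum_eq_bound_imp_eq[where w=mm and I="{0..3}"])
    show "sum mm {0..3} = 1" by (simp add: sum_atLeast0_atMost_3 mm_def)
    show "0 < mm i" if "i \<in> {0..3}" for i
      using m1_bounds that by (auto simp: atLeast0_atMost_3 mm_def)
    show "D_mixed t0 t1 t2 (pp i) \<le> a0" if "i \<in> {0..3}" for i
      using best pp_in_unit that by blast
  qed (use val E_mu_sum[OF t] that in simp_all)
  have at_0: "D_mixed t0 t1 t2 0 = a0" and at_p1: "D_mixed t0 t1 t2 p1 = a0"
    and at_1: "D_mixed t0 t1 t2 1 = a0"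
    using at_support[of 0] at_support[of 1] at_support[of 3] by (simp_all add: pp_def)
  show mean0: "mean t0 = a0" using at_0 by (simp add: D_mixed_def abs_dev_0[OF t(1)])
  show mean2: "mean t2 = 1 - a0" using at_1 by (simp add: D_mixed_def abs_dev_1[OF t(3)])
  have "eq_loss p1 = a0" using eq_loss_eq_a0_iff p1_bounds by (simp add: pp_image)
  then have "(1 - p1)^2 * (p1 - a0) + 2 * p1 * (1 - p1) * (1/2 - p1) + p1^2 * (1 - a0 - p1) = a0"
    using a0_bounds p1_bounds unfolding eq_loss_def D_expand by (simp add: abs_if)
  moreover have "(1 - p1)^2 * (p1 - a0) + 2 * p1 * (1 - p1) * (mean t1 - p1) + p1^2 * (1 - a0 - p1) = a0"
    using at_p1 dev_at_p1_eq_0_of_E_mu[OF t val] mean0 mean2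
    by (simp add: D_mixed_def abs_dev_eq_upper_dev[OF t(1)] abs_dev_eq_lower_dev[OF t(2)]
        abs_dev_eq_lower_dev[OF t(3)])
  ultimately have "2 * p1 * (1 - p1) * (mean t1 - 1/2) = 0" by (simp add: algebra_simps)
  then show "mean t1 = 1/2" using p1_bounds by simp
qed

lemma AE_support_of_E_equilibrium:
  assumes nu: "nu \<in> Omega" and val: "E (dirac a0) (dirac (1/2)) (dirac (1 - a0)) nu = a0"
  shows "AE p in nu. p \<in> pp ` {0..3}"
proof -
  interpret prob_space nu by (rule Omega_prob_space[OF nu])
  have "(LINT p|nu. a0 - eq_loss p) = 0"
    using val integrable_eq_loss[OF nu] by (simp add: E_equilibrium prob_space)
  moreover have "AE p in nu. 0 \<le> a0 - eq_loss p"
    using eq_loss_le by (intro AE_I2) (simp add: space_Omega[OF nu])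
  ultimately have "AE p in nu. a0 - eq_loss p = 0"
    using integral_nonneg_eq_0_iff_AE[of nu "\<lambda>p. a0 - eq_loss p"] integrable_eq_loss[OF nu] by simp
  moreover have "AE p in nu. p \<in> {0..1}" using AE_space[of nu] unfolding space_Omega[OF nu] .
  ultimately show ?thesis
  proof eventually_elim
    case (elim p)
    then show ?case using eq_loss_eq_a0_iff[of p] by simp
  qed
qed

lemma slope_eq_0_of_interior_min:
  fixes g :: "real \<Rightarrow> real"
  assumes "u < a" "a < v" and affine: "\<And>x. x \<in> {u..v} \<Longrightarrow> g x = \<alpha> + \<beta> * x"
    and "g a \<le> g u" "g a \<le> g v"
  shows "\<beta> = 0"
proof -
  have "\<beta> * (a - u) \<le> 0" "0 \<le> \<beta> * (v - a)"
    using assms affine[of u] affine[of a] affine[of v] by (simp_all add: algebra_simps)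
  then show ?thesis using assms(1,2) by (simp add: mult_le_0_iff zero_le_mult_iff)
qed

lemma D_sum_support_split:
  "(\<Sum>i\<in>{0..3}. D x0 x1 x2 (pp i) * w i) =
      (w 0 * \<bar>x0\<bar> + w 1 * (1 - p1)^2 * \<bar>p1 - x0\<bar> + w 2 * p1^2 * \<bar>1 - p1 - x0\<bar>)
    + 2 * p1 * (1 - p1) * (w 1 * \<bar>p1 - x1\<bar> + w 2 * \<bar>1 - p1 - x1\<bar>)
    + (w 1 * p1^2 * \<bar>p1 - x2\<bar> + w 2 * (1 - p1)^2 * \<bar>1 - p1 - x2\<bar> + w 3 * \<bar>1 - x2\<bar>)"
  by (simp add: sum_atLeast0_atMost_3 pp_def D_expand algebra_simps)

lemma best_response_weights:
  fixes w :: "nat \<Rightarrow> real"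
  assumes best: "\<And>x0 x1 x2. x0 \<in> {0..1} \<Longrightarrow> x1 \<in> {0..1} \<Longrightarrow> x2 \<in> {0..1} \<Longrightarrow>
      (\<Sum>i\<in>{0..3}. D a0 (1/2) (1 - a0) (pp i) * w i) \<le> (\<Sum>i\<in>{0..3}. D x0 x1 x2 (pp i) * w i)"
    and total: "sum w {0..3} = 1"
  shows "w 0 = 1/2 - m1" "w 1 = m1" "w 2 = m1" "w 3 = 1/2 - m1"
proof -
  define G0 where "G0 x = w 0 * \<bar>x\<bar> + w 1 * (1 - p1)^2 * \<bar>p1 - x\<bar> + w 2 * p1^2 * \<bar>1 - p1 - x\<bar>" for x
  define G1 where "G1 x = w 1 * \<bar>p1 - x\<bar> + w 2 * \<bar>1 - p1 - x\<bar>" for x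
  define G2 where "G2 x = w 1 * p1^2 * \<bar>p1 - x\<bar> + w 2 * (1 - p1)^2 * \<bar>1 - p1 - x\<bar> + w 3 * \<bar>1 - x\<bar>" for x
  have split: "(\<Sum>i\<in>{0..3}. D x0 x1 x2 (pp i) * w i) = G0 x0 + 2 * p1 * (1 - p1) * G1 x1 + G2 x2"
    for x0 x1 x2 unfolding G0_def G1_def G2_def D_sum_support_split ..
  note bounds = a0_bounds p1_bounds guesses_in_unit
  have "0 < 2 * p1 * (1 - p1)" using p1_bounds by simp
  then have min0: "G0 a0 \<le> G0 x" and min1: "G1 (1/2) \<le> G1 x" and min2: "G2 (1 - a0) \<le> G2 x"
    if "x \<in> {0..1}" for x
    using best[of x "1/2" "1 - a0"] best[of a0 x "1 - a0"] best[of a0 "1/2" x] that bounds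
    unfolding split by simp_all
  have slope0: "w 0 - w 1 * (1 - p1)^2 - w 2 * p1^2 = 0"
  proof (rule slope_eq_0_of_interior_min[where g=G0 and u=0 and a=a0 and v=p1])
    show "G0 x = (w 1 * (1 - p1)^2 * p1 + w 2 * p1^2 * (1 - p1))
        + (w 0 - w 1 * (1 - p1)^2 - w 2 * p1^2) * x" if "x \<in> {0..p1}" for x
      using that p1_bounds unfolding G0_def by (simp add: algebra_simps)
  qed (use bounds min0 in auto)
  have slope1: "w 1 - w 2 = 0"
  proof (rule slope_eq_0_of_interior_min[where g=G1 and u=p1 and a="1/2" and v="1 - p1"])
    show "G1 x = (w 2 * (1 - p1) - w 1 * p1) + (w 1 - w 2) * x" if "x \<in> {p1..1 - p1}" for x
      using that unfolding G1_def by (simp add: algebra_simps)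
  qed (use bounds min1 in auto)
  have slope2: "w 1 * p1^2 + w 2 * (1 - p1)^2 - w 3 = 0"
  proof (rule slope_eq_0_of_interior_min[where g=G2 and u="1 - p1" and a="1 - a0" and v=1])
    show "G2 x = (w 3 - w 1 * p1^3 - w 2 * (1 - p1)^3) + (w 1 * p1^2 + w 2 * (1 - p1)^2 - w 3) * x"
      if "x \<in> {1 - p1..1}" for x
      using that p1_bounds unfolding G2_def by (simp add: algebra_simps power2_eq_square power3_eq_cube)
  qed (use bounds min2 in auto)
  have "w 1 * (p1^2 + (1 - p1)^2 + 1) = 1/2"
    using total slope0 slope1 slope2 by (simp add: sum_atLeast0_atMost_3 algebra_simps)
  moreover have "p1^2 + (1 - p1)^2 + 1 \<noteq> 0"
    using add_nonneg_pos[of "p1^2 + (1 - p1)^2" 1] by simp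
  ultimately have w1: "w 1 = m1" using m1_eq by (metis mult_right_cancel)
  then show "w 1 = m1" "w 2 = m1" using slope1 by simp_all
  show "w 0 = 1/2 - m1" "w 3 = 1/2 - m1" using slope0 slope1 slope2 w1 m0_eq by (simp_all add: algebra_simps)
qed

lemma saddle_unique:
  assumes s: "s0 \<in> Omega" "s1 \<in> Omega" "s2 \<in> Omega" and nu: "nu \<in> Omega"
    and saddle: "saddle s0 s1 s2 nu"
  shows "mean s0 = a0 \<and> mean s1 = 1/2 \<and> mean s2 = 1 - a0 \<and> nu = mu"
proof -
  note game_value = saddle_values[OF s nu saddle]
  have "D_mixed s0 s1 s2 p \<le> a0" if "p \<in> {0..1}" for p
    using saddle game_value(1) dirac_in_Omega[OF that] E_dirac_bias[OF s that] unfolding saddle_def by metis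
  then have means: "mean s0 = a0" "mean s1 = 1/2" "mean s2 = 1 - a0"
    using means_of_best_response[OF s game_value(2)] by blast+
  have support: "AE p in nu. p \<in> pp ` {0..3}"
    by (rule AE_support_of_E_equilibrium[OF nu game_value(3)])
  define w where "w i = measure nu {pp i}" for i
  have E_nu: "E (dirac x0) (dirac x1) (dirac x2) nu = (\<Sum>i\<in>{0..3}. D x0 x1 x2 (pp i) * w i)"
    if "x0 \<in> {0..1}" "x1 \<in> {0..1}" "x2 \<in> {0..1}" for x0 x1 x2
    unfolding E_dirac_strategies[OF that] w_def
    by (rule integral_finite_support[OF nu _ inj_on_pp pp_in_unit support])
       (simp_all add: borel_measurable_D)
  have best: "(\<Sum>i\<in>{0..3}. D a0 (1/2) (1 - a0) (pp i) * w i) \<le> (\<Sum>i\<in>{0..3}. D x0 x1 x2 (pp i) * w i)"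
    if "x0 \<in> {0..1}" "x1 \<in> {0..1}" "x2 \<in> {0..1}" for x0 x1 x2
    using saddle game_value(1,3) dirac_in_Omega[OF that(1)] dirac_in_Omega[OF that(2)]
      dirac_in_Omega[OF that(3)] E_nu[OF that] E_nu[OF guesses_in_unit]
    unfolding saddle_def by metis
  have total: "sum w {0..3} = 1"
    using integral_finite_support[OF nu _ inj_on_pp pp_in_unit support, of "\<lambda>_. 1"]
      prob_space.prob_space[OF Omega_prob_space[OF nu]]
    by (simp add: w_def)
  have "w i = mm i" if "i \<in> {0..3}" for i
    using best_response_weights[OF best total] that by (auto simp: atLeast0_atMost_3 mm_def)
  then have "nu = mu"
    using measure_mu_pp
    by (intro Omega_eqI_finite_support[OF nu mu_in_Omega _ inj_on_pp pp_in_unit support AE_mu_support])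
       (simp_all add: w_def)
  then show ?thesis using means by simp
qed

theorem theorem5p1:
  shows "mu \<in> Omega
    \<and> saddle (dirac a0) (dirac (1/2)) (dirac (1 - a0)) mu
    \<and> (\<forall>s0\<in>Omega. \<forall>s1\<in>Omega. \<forall>s2\<in>Omega. \<forall>nu\<in>Omega.
         saddle s0 s1 s2 nu \<longrightarrow>
           (LINT x|s0. x) = a0 \<and> (LINT x|s1. x) = 1/2 \<and> (LINT x|s2. x) = 1 - a0 \<and> nu = mu)"
  using mu_in_Omega saddle_equilibrium saddle_unique unfolding mean_def by blast

end
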